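(* For any probability distributions $\mathbf{p},\mathbf{q}$ on $G_\Delta$ and any $\sigma>0$, $\mathrm{TV}(\tilde H^\sigma_{\mathbf{p}},\tilde H^\sigma_{\mathbf{q}})\le\frac{\sqrt{\mathrm{EMD}(\mathbf{p},\mathbf{q})}}{2\sigma}$.
   Context: $G_\Delta=\{(i/\Delta,j/\Delta):i,j\in\{0,\dots,\Delta-1\}\}$, $\tilde G_\Delta=\{(i/\Delta,j/\Delta):i,j\in\mathbb{Z}\}$. $\tilde H^\sigma_{\mathbf{p}}(a)=\sum_{a'\in G_\Delta}\frac1Z e^{-\|a-a'\|_2^2/(2\sigma^2)}\mathbf{p}(a')$ for $a\in\tilde G_\Delta$, $Z=\sum_{d\in\tilde G_\Delta}e^{-\|d\|_2^2/(2\sigma^2)}$. $\mathrm{TV}(P,Q)=\frac12\sum_a|P(a)-Q(a)|$. $\mathrm{EMD}(\mathbf{p},\mathbf{q})=\min_\gamma\sum_{x,y}\gamma(x,y)\|x-y\|_1$ over nonnegative couplings with marginals $\mathbf{p},\mathbf{q}$. *)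

theory Defs
  imports "HOL-Analysis.Analysis"
begin

text \<open>Points of the plane are elements of real \<times> real; the norm on this
product type is the Euclidean norm.\<close>

definition grid :: "nat \<Rightarrow> (real \<times> real) set" where
  "grid \<Delta> = {(real i / real \<Delta>, real j / real \<Delta>) | i j. i < \<Delta> \<and> j < \<Delta>}"

definition igrid :: "nat \<Rightarrow> (real \<times> real) set" where
  "igrid \<Delta> = {(real_of_int i / real \<Delta>, real_of_int j / real \<Delta>) | i j. True}"

definition is_distr :: "nat \<Rightarrow> (real \<times> real \<Rightarrow> real) \<Rightarrow> bool" where
  "is_distr \<Delta> p \<longleftrightarrow> (\<forall>a\<in>grid \<Delta>. p a \<ge> 0) \<and> (\<Sum>a\<in>grid \<Delta>. p a) = 1"

definition gauss_Z :: "nat \<Rightarrow> real \<Rightarrow> real" where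
  "gauss_Z \<Delta> \<sigma> = (\<Sum>\<^sub>\<infinity>d\<in>igrid \<Delta>. exp (- (norm d)\<^sup>2 / (2 * \<sigma>\<^sup>2)))"

definition Htilde :: "nat \<Rightarrow> real \<Rightarrow> (real \<times> real \<Rightarrow> real) \<Rightarrow> real \<times> real \<Rightarrow> real" where
  "Htilde \<Delta> \<sigma> p a =
     (\<Sum>a'\<in>grid \<Delta>. (1 / gauss_Z \<Delta> \<sigma>) * exp (- (norm (a - a'))\<^sup>2 / (2 * \<sigma>\<^sup>2)) * p a')"

definition TV :: "nat \<Rightarrow> (real \<times> real \<Rightarrow> real) \<Rightarrow> (real \<times> real \<Rightarrow> real) \<Rightarrow> real" where
  "TV \<Delta> P Q = (1/2) * (\<Sum>\<^sub>\<infinity>a\<in>igrid \<Delta>. \<bar>P a - Q a\<bar>)"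

definition l1dist :: "real \<times> real \<Rightarrow> real \<times> real \<Rightarrow> real" where
  "l1dist x y = \<bar>fst x - fst y\<bar> + \<bar>snd x - snd y\<bar>"

definition is_coupling ::
  "nat \<Rightarrow> (real \<times> real \<Rightarrow> real) \<Rightarrow> (real \<times> real \<Rightarrow> real)
     \<Rightarrow> (real \<times> real \<Rightarrow> real \<times> real \<Rightarrow> real) \<Rightarrow> bool" where
  "is_coupling \<Delta> p q \<gamma> \<longleftrightarrow>
     (\<forall>x\<in>grid \<Delta>. \<forall>y\<in>grid \<Delta>. \<gamma> x y \<ge> 0) \<and>
     (\<forall>x\<in>grid \<Delta>. (\<Sum>y\<in>grid \<Delta>. \<gamma> x y) = p x) \<and>
     (\<forall>y\<in>grid \<Delta>. (\<Sum>x\<in>grid \<Delta>. \<gamma> x y) = q y)"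

text \<open>The minimum over couplings (attained, as this is a feasible bounded LP)
is written as an infimum.\<close>
definition EMD :: "nat \<Rightarrow> (real \<times> real \<Rightarrow> real) \<Rightarrow> (real \<times> real \<Rightarrow> real) \<Rightarrow> real" where
  "EMD \<Delta> p q = Inf {(\<Sum>x\<in>grid \<Delta>. \<Sum>y\<in>grid \<Delta>. \<gamma> x y * l1dist x y) | \<gamma>. is_coupling \<Delta> p q \<gamma>}"

end

theory Submission
  imports Defs
begin

text \<open>Write \<open>N\<^sub>x\<close> for the discrete Gaussian on the lattice centred at \<open>x\<close>, so that
  \<open>Htilde p = \<Sum>\<^sub>x p x \<cdot> N\<^sub>x\<close>. For two lattice points Pinsker's inequality gives
  \<open>TV (N\<^sub>x, N\<^sub>y) \<le> \<parallel>x - y\<parallel> / (2\<sigma>)\<close>: the relative entropy of \<open>N\<^sub>y\<close> with respect to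
  \<open>N\<^sub>x\<close> is \<open>\<parallel>x - y\<parallel>\<^sup>2 / (2\<sigma>\<^sup>2)\<close>, because the first moments of a centred Gaussian vanish
  by symmetry. For any coupling \<open>\<gamma>\<close> of \<open>p\<close> and \<open>q\<close> we have
  \<open>Htilde p - Htilde q = \<Sum> \<gamma> x y \<cdot> (N\<^sub>x - N\<^sub>y)\<close>, so the triangle inequality and
  Jensen's inequality give
  \<open>(2\<sigma> TV)\<^sup>2 \<le> (\<Sum> \<gamma> \<parallel>x - y\<parallel>)\<^sup>2 \<le> \<Sum> \<gamma> \<parallel>x - y\<parallel>\<^sup>2 \<le> \<Sum> \<gamma> \<parallel>x - y\<parallel>\<^sub>1\<close>,
  the last step because grid points lie in the unit square. Minimising over \<open>\<gamma>\<close> gives the EMD.\<close>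

lemma ln_ge_rational_bound:
  fixes u :: real
  assumes "u > 0"
  shows "(u - 1) * (5 * u + 1) / (2 * u * (u + 2)) \<le> ln u"
proof -
  define F where "F v = ln v - (v - 1) * (5 * v + 1) / (2 * v * (v + 2))" for v :: real
  have F': "(F has_real_derivative (v - 1) ^ 3 / (v\<^sup>2 * (v + 2)\<^sup>2)) (at v)" if "v > 0" for v
  proof -
    have "(F has_real_derivative 1 / v - ((5 * v + 1 + (v - 1) * 5) * (2 * v * (v + 2))
        - (v - 1) * (5 * v + 1) * (2 * (v + 2) + 2 * v)) / (2 * v * (v + 2))\<^sup>2) (at v)"
      unfolding F_def using that by (auto intro!: derivative_eq_intros simp: power2_eq_square)
    also have "1 / v - ((5 * v + 1 + (v - 1) * 5) * (2 * v * (v + 2))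
        - (v - 1) * (5 * v + 1) * (2 * (v + 2) + 2 * v)) / (2 * v * (v + 2))\<^sup>2
        = (v - 1) ^ 3 / (v\<^sup>2 * (v + 2)\<^sup>2)"
      using that by (simp add: divide_simps) algebra
    finally show ?thesis .
  qed
  have "F 1 \<le> F u"
  proof (cases "u \<le> 1")
    case True
    then show ?thesis
      using assms by (intro deriv_nonpos_imp_antimono[OF F'])
        (auto intro!: divide_nonpos_nonneg simp: power_le_zero_eq)
  next
    case False
    then show ?thesis by (intro deriv_nonneg_imp_mono[OF F']) auto
  qed
  then show ?thesis by (simp add: F_def)
qed

lemma sq_diff_le_relative_entropy:
  fixes P Q :: real
  assumes "P > 0" "Q > 0"
  shows "3 * (Q - P)\<^sup>2 \<le> (2 * Q + 4 * P) * (Q * ln (Q / P) - Q + P)"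
proof -
  define u where "u = Q / P"
  have u: "u > 0" and Q: "Q = u * P"
    using assms by (simp_all add: u_def)
  have "(u - 1) * (5 * u + 1) \<le> 2 * u * (u + 2) * ln u"
    using ln_ge_rational_bound[OF u] u by (simp add: pos_divide_le_eq mult.commute)
  then have "3 * (u - 1)\<^sup>2 \<le> 2 * (u + 2) * (u * ln u - u + 1)"
    by (simp add: power2_eq_square algebra_simps)
  then have "P\<^sup>2 * (3 * (u - 1)\<^sup>2) \<le> P\<^sup>2 * (2 * (u + 2) * (u * ln u - u + 1))"
    by (rule mult_left_mono) simp
  then show ?thesis
    unfolding u_def[symmetric] by (simp add: Q power2_eq_square algebra_simps)
qed

lemma abs_le_arith_mean_if_sq_le_mult:
  fixes d X Y t :: real
  assumes "d\<^sup>2 \<le> X * Y" "X \<ge> 0" "Y \<ge> 0" "t > 0"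
  shows "\<bar>d\<bar> \<le> (t * X + Y / t) / 2"
proof (rule power2_le_imp_le)
  have "X * Y \<le> ((t * X + Y / t) / 2)\<^sup>2"
    using \<open>t > 0\<close> zero_le_power2[of "t * X - Y / t"]
    by (simp add: power2_eq_square field_simps)
  then show "\<bar>d\<bar>\<^sup>2 \<le> ((t * X + Y / t) / 2)\<^sup>2"
    using assms(1) by simp
  show "0 \<le> (t * X + Y / t) / 2"
    using assms(2-4) by simp
qed

text \<open>Pointwise form of Pinsker's inequality; the parameter \<open>t\<close> is chosen after summation.\<close>
lemma abs_diff_le_relative_entropy:
  fixes P Q t :: real
  assumes "P > 0" "Q > 0" "t > 0"
  shows "\<bar>Q - P\<bar> \<le> t * (Q + 2 * P) / 3 + (Q * ln (Q / P) - Q + P) / (2 * t)"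
proof -
  define Y where "Y = Q * ln (Q / P) - Q + P"
  have sq: "(Q - P)\<^sup>2 \<le> ((2 * Q + 4 * P) / 3) * Y"
    using sq_diff_le_relative_entropy[OF assms(1,2)] by (simp add: Y_def)
  have "0 \<le> (2 * Q + 4 * P) * Y"
    using sq_diff_le_relative_entropy[OF assms(1,2)] zero_le_power2[of "Q - P"]
    unfolding Y_def by linarith
  then have "Y \<ge> 0"
    using assms by (simp add: zero_le_mult_iff)
  then have "\<bar>Q - P\<bar> \<le> (t * ((2 * Q + 4 * P) / 3) + Y / t) / 2"
    using assms by (intro abs_le_arith_mean_if_sq_le_mult[OF sq]) auto
  also have "\<dots> = t * (Q + 2 * P) / 3 + Y / (2 * t)"
    by (simp add: field_simps)
  finally show ?thesis
    by (simp add: Y_def)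
qed

section \<open>Unconditional sums over lattices\<close>

lemma summable_on_exp_neg_sq_nat:
  fixes c :: real
  assumes "c > 0"
  shows "(\<lambda>n::nat. exp (- c * (real n)\<^sup>2)) summable_on UNIV"
proof (rule norm_summable_imp_summable_on)
  show "summable (\<lambda>n. norm (exp (- c * (real n)\<^sup>2)))"
  proof (rule summable_comparison_test)
    show "summable (\<lambda>n. exp (- c) ^ n)"
      using assms by (intro summable_geometric) simp
    have "norm (exp (- c * (real n)\<^sup>2)) \<le> exp (- c) ^ n" for n
    proof -
      have "real n \<le> (real n)\<^sup>2"
        by (cases n) (auto simp: power2_eq_square)
      then show ?thesis
        using assms by (simp add: exp_of_nat_mult[symmetric] mult_left_mono)
    qed
    then show "\<exists>N. \<forall>n\<ge>N. norm (norm (exp (- c * (real n)\<^sup>2))) \<le> exp (- c) ^ n"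
      by simp
  qed
qed

lemma summable_on_UNIV_int:
  fixes f :: "int \<Rightarrow> real"
  assumes "(\<lambda>n. f (int n)) summable_on UNIV" "(\<lambda>n. f (- int n)) summable_on UNIV"
  shows "f summable_on UNIV"
proof -
  have "f summable_on range int" "f summable_on range (\<lambda>n. - int n)"
    using assms by (simp_all add: summable_on_reindex inj_on_def o_def)
  then have "f summable_on (range int \<union> range (\<lambda>n. - int n))"
    by (rule summable_on_union)
  also have "range int \<union> range (\<lambda>n. - int n) = UNIV"
  proof (intro set_eqI iffI)
    show "i \<in> range int \<union> range (\<lambda>n. - int n)" for i :: int
      by (cases i rule: int_cases2) auto
  qed auto
  finally show ?thesis .
qed

lemma summable_on_exp_neg_sq_int:
  fixes c :: real
  assumes "c > 0"
  shows "(\<lambda>i::int. exp (- c * (of_int i)\<^sup>2)) summable_on UNIV"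
  using summable_on_exp_neg_sq_nat[OF assms] by (intro summable_on_UNIV_int) simp_all

lemma summable_on_mult_Times:
  fixes f :: "'a \<Rightarrow> real" and g :: "'b \<Rightarrow> real"
  assumes "f summable_on A" "g summable_on B"
    and "\<And>x. x \<in> A \<Longrightarrow> f x \<ge> 0" "\<And>y. y \<in> B \<Longrightarrow> g y \<ge> 0"
  shows "(\<lambda>(x, y). f x * g y) summable_on A \<times> B"
proof (rule summable_on_SigmaI)
  show "((\<lambda>y. case (x, y) of (x, y) \<Rightarrow> f x * g y) has_sum f x * infsum g B) B" for x
    using assms(2) by (simp add: has_sum_cmult_right)
  show "(\<lambda>x. f x * infsum g B) summable_on A"
    using assms(1) by (rule summable_on_cmult_left)
qed (use assms in auto)

lemma has_sum_shift_iff: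
  fixes L :: "'a::ab_group_add set"
  assumes "\<And>a. a \<in> L \<Longrightarrow> a - x \<in> L" "\<And>a. a \<in> L \<Longrightarrow> a + x \<in> L"
  shows "((\<lambda>a. f (a - x)) has_sum S) L \<longleftrightarrow> (f has_sum S) L"
  by (rule has_sum_reindex_bij_betw, rule bij_betwI[where g = "\<lambda>a. a + x"]) (use assms in auto)

lemma infsum_odd_eq_0:
  fixes h :: "'a::ab_group_add \<Rightarrow> real"
  assumes "\<And>a. a \<in> L \<Longrightarrow> - a \<in> L" "\<And>a. h (- a) = - h a"
  shows "infsum h L = 0"
proof -
  have "bij_betw uminus L L"
    by (rule bij_betwI[where g = uminus]) (use assms(1) in auto)
  then have "infsum h L = infsum (\<lambda>a. h (- a)) L"
    by (rule infsum_reindex_bij_betw[symmetric])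
  also have "\<dots> = - infsum h L"
    by (simp add: assms(2) infsum_uminus)
  finally show ?thesis
    by simp
qed

lemma has_sum_sum:
  fixes f :: "'i \<Rightarrow> 'a \<Rightarrow> 'b::{topological_comm_monoid_add}"
  assumes "finite I" "\<And>i. i \<in> I \<Longrightarrow> (f i has_sum s i) A"
  shows "((\<lambda>a. \<Sum>i\<in>I. f i a) has_sum (\<Sum>i\<in>I. s i)) A"
  using assms by (induction I rule: finite_induct) (auto intro: has_sum_add)

lemma igrid_iff: "a \<in> igrid \<Delta> \<longleftrightarrow> (\<exists>i j. a = (of_int i / real \<Delta>, of_int j / real \<Delta>))"
  by (simp add: igrid_def)

lemma zero_in_igrid: "0 \<in> igrid \<Delta>"
  unfolding igrid_iff zero_prod_def by (metis div_0 of_int_0)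

lemma diff_in_igrid:
  assumes "a \<in> igrid \<Delta>" "b \<in> igrid \<Delta>"
  shows "a - b \<in> igrid \<Delta>"
proof -
  obtain i j k l where "a = (of_int i / real \<Delta>, of_int j / real \<Delta>)"
    and "b = (of_int k / real \<Delta>, of_int l / real \<Delta>)"
    using assms unfolding igrid_iff by blast
  then have "a - b = (of_int (i - k) / real \<Delta>, of_int (j - l) / real \<Delta>)"
    by (simp add: diff_divide_distrib)
  then show ?thesis
    unfolding igrid_iff by blast
qed

lemma uminus_in_igrid: "a \<in> igrid \<Delta> \<Longrightarrow> - a \<in> igrid \<Delta>"
  using diff_in_igrid[OF zero_in_igrid] by fastforce

lemma add_in_igrid: "a \<in> igrid \<Delta> \<Longrightarrow> b \<in> igrid \<Delta> \<Longrightarrow> a + b \<in> igrid \<Delta>"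
  using diff_in_igrid[OF _ uminus_in_igrid] by fastforce

lemma has_sum_igrid_shift:
  assumes "x \<in> igrid \<Delta>" "(f has_sum S) (igrid \<Delta>)"
  shows "((\<lambda>a. f (a - x)) has_sum S) (igrid \<Delta>)"
  using assms by (subst has_sum_shift_iff) (auto intro: diff_in_igrid add_in_igrid)

lemma grid_subset_igrid: "grid \<Delta> \<subseteq> igrid \<Delta>"
proof
  fix a assume "a \<in> grid \<Delta>"
  then obtain i j :: nat where "a = (of_int (int i) / real \<Delta>, of_int (int j) / real \<Delta>)"
    unfolding grid_def by auto
  then show "a \<in> igrid \<Delta>"
    unfolding igrid_iff by blast
qed

lemma finite_grid: "finite (grid \<Delta>)"
proof -
  have "grid \<Delta> = (\<lambda>(i, j). (real i / real \<Delta>, real j / real \<Delta>)) ` ({..<\<Delta>} \<times> {..<\<Delta>})"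
    unfolding grid_def by auto
  then show ?thesis
    by simp
qed

lemma summable_on_igrid_exp_neg_sq:
  fixes c :: real
  assumes "c > 0" "\<Delta> > 0"
  shows "(\<lambda>d. exp (- c * (norm d)\<^sup>2)) summable_on igrid \<Delta>"
proof -
  define c' where "c' = c / (real \<Delta>)\<^sup>2"
  have "c' > 0"
    using assms by (simp add: c'_def)
  define \<phi> where "\<phi> = (\<lambda>(i::int, j::int). (of_int i / real \<Delta>, of_int j / real \<Delta>))"
  have "igrid \<Delta> = range \<phi>"
    by (auto simp: igrid_def \<phi>_def)
  moreover have "inj \<phi>"
    using assms(2) by (auto simp: inj_on_def \<phi>_def)
  moreover have "(\<lambda>d. exp (- c * (norm d)\<^sup>2)) \<circ> \<phi>
      = (\<lambda>(i, j). exp (- c' * (of_int i)\<^sup>2) * exp (- c' * (of_int j)\<^sup>2))"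
    by (auto simp: \<phi>_def c'_def norm_Pair field_simps simp flip: exp_add)
  moreover have "(\<lambda>(i, j). exp (- c' * (of_int i)\<^sup>2) * exp (- c' * (of_int j)\<^sup>2))
      summable_on (UNIV :: (int \<times> int) set)"
    using summable_on_mult_Times[OF summable_on_exp_neg_sq_int summable_on_exp_neg_sq_int, OF \<open>c' > 0\<close> \<open>c' > 0\<close>]
    by simp
  ultimately show ?thesis
    by (simp add: summable_on_reindex)
qed

section \<open>Discrete Gaussians\<close>

definition gauss_kernel :: "real \<Rightarrow> 'a::real_normed_vector \<Rightarrow> real" where
  "gauss_kernel \<sigma> d = exp (- (norm d)\<^sup>2 / (2 * \<sigma>\<^sup>2))"

lemma gauss_kernel_pos: "gauss_kernel \<sigma> d > 0"
  by (simp add: gauss_kernel_def)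

lemma gauss_kernel_uminus: "gauss_kernel \<sigma> (- d) = gauss_kernel \<sigma> d"
  by (simp add: gauss_kernel_def)

lemma gauss_Z_eq_infsum: "gauss_Z \<Delta> \<sigma> = infsum (gauss_kernel \<sigma>) (igrid \<Delta>)"
  by (simp add: gauss_Z_def gauss_kernel_def[abs_def])

lemma Htilde_eq:
  "Htilde \<Delta> \<sigma> p a = (\<Sum>x\<in>grid \<Delta>. gauss_kernel \<sigma> (a - x) * p x) / gauss_Z \<Delta> \<sigma>"
  by (simp add: Htilde_def gauss_kernel_def sum_divide_distrib)

lemma ln_gauss_kernel_ratio:
  fixes a x y :: "'a::real_inner"
  shows "ln (gauss_kernel \<sigma> (a - y) / gauss_kernel \<sigma> (a - x))
    = (2 * inner (a - y) (y - x) + (norm (y - x))\<^sup>2) / (2 * \<sigma>\<^sup>2)"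
proof -
  have "(norm (a - x))\<^sup>2 = (norm (a - y))\<^sup>2 + 2 * inner (a - y) (y - x) + (norm (y - x))\<^sup>2"
    by (simp add: power2_norm_eq_inner inner_commute algebra_simps)
  then show ?thesis
    by (simp add: gauss_kernel_def ln_div add_divide_distrib diff_divide_distrib)
qed

lemma mult_exp_neg_sq_le:
  fixes r c :: real
  assumes "r \<ge> 0" "c > 0"
  shows "r * exp (- c * r\<^sup>2) \<le> (1 + 2 / c) * exp (- (c / 2) * r\<^sup>2)"
proof -
  have split: "exp (- c * r\<^sup>2) = exp (- (c / 2) * r\<^sup>2) * exp (- (c / 2) * r\<^sup>2)"
    by (simp flip: exp_add)
  have "r \<le> 1 + r\<^sup>2"
    using zero_le_power2[of "r - 1/2"] by (simp add: power2_eq_square algebra_simps)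
  have "c / 2 * r\<^sup>2 \<le> exp (c / 2 * r\<^sup>2)"
    using exp_ge_add_one_self[of "c / 2 * r\<^sup>2"] by linarith
  then have "r\<^sup>2 * exp (- (c / 2) * r\<^sup>2) \<le> 2 / c"
    using assms(2) by (simp add: exp_minus field_simps)
  have "r * exp (- c * r\<^sup>2) \<le> (1 + r\<^sup>2) * exp (- c * r\<^sup>2)"
    using \<open>r \<le> 1 + r\<^sup>2\<close> by (rule mult_right_mono) simp
  also have "\<dots> = exp (- (c / 2) * r\<^sup>2) * (exp (- (c / 2) * r\<^sup>2) + r\<^sup>2 * exp (- (c / 2) * r\<^sup>2))"
    unfolding split by (simp add: algebra_simps)
  also have "\<dots> \<le> exp (- (c / 2) * r\<^sup>2) * (1 + 2 / c)"
    using assms \<open>r\<^sup>2 * exp (- (c / 2) * r\<^sup>2) \<le> 2 / c\<close> by (intro mult_left_mono add_mono) auto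
  finally show ?thesis
    by (simp add: mult.commute)
qed

lemma summable_on_gauss_kernel:
  assumes "\<sigma> \<noteq> 0" "\<Delta> > 0"
  shows "gauss_kernel \<sigma> summable_on igrid \<Delta>"
  using summable_on_igrid_exp_neg_sq[of "1 / (2 * \<sigma>\<^sup>2)" \<Delta>] assms
  by (simp add: gauss_kernel_def[abs_def])

lemma summable_on_gauss_kernel_mult:
  assumes "\<sigma> \<noteq> 0" "\<Delta> > 0" and h: "\<And>d. \<bar>h d\<bar> \<le> norm d * C"
  shows "(\<lambda>d. gauss_kernel \<sigma> d * h d) summable_on igrid \<Delta>"
proof (rule abs_summable_summable)
  define c where "c = 1 / (2 * \<sigma>\<^sup>2)"
  have "c > 0"
    using assms(1) by (simp add: c_def)
  have "(\<lambda>d. \<bar>C\<bar> * ((1 + 2 / c) * exp (- (c / 2) * (norm d)\<^sup>2))) summable_on igrid \<Delta>"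
    using \<open>c > 0\<close> assms(2) by (intro summable_on_cmult_right summable_on_igrid_exp_neg_sq) auto
  then show "(\<lambda>d. norm (gauss_kernel \<sigma> d * h d)) summable_on igrid \<Delta>"
  proof (rule summable_on_comparison_test)
    fix d
    have "\<bar>h d\<bar> \<le> norm d * \<bar>C\<bar>"
      using h[of d] by (meson abs_ge_self mult_left_mono norm_ge_zero order_trans)
    then have "norm (gauss_kernel \<sigma> d * h d) \<le> \<bar>C\<bar> * (norm d * exp (- c * (norm d)\<^sup>2))"
      by (simp add: gauss_kernel_def c_def abs_mult mult_left_mono mult.commute mult.left_commute)
    also have "\<dots> \<le> \<bar>C\<bar> * ((1 + 2 / c) * exp (- (c / 2) * (norm d)\<^sup>2))"
      using \<open>c > 0\<close> by (intro mult_left_mono mult_exp_neg_sq_le) auto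
    finally show "norm (gauss_kernel \<sigma> d * h d) \<le> \<bar>C\<bar> * ((1 + 2 / c) * exp (- (c / 2) * (norm d)\<^sup>2))" .
  qed auto
qed

lemma gauss_Z_ge_1:
  assumes "\<sigma> \<noteq> 0" "\<Delta> > 0"
  shows "gauss_Z \<Delta> \<sigma> \<ge> 1"
proof -
  have "sum (gauss_kernel \<sigma>) {0 :: real \<times> real} \<le> infsum (gauss_kernel \<sigma>) (igrid \<Delta>)"
    by (rule finite_sum_le_infsum)
      (use summable_on_gauss_kernel[OF assms] zero_in_igrid gauss_kernel_pos in \<open>auto intro: less_imp_le\<close>)
  then show ?thesis
    by (simp add: gauss_Z_eq_infsum gauss_kernel_def)
qed

lemma has_sum_gauss_kernel_shift:
  assumes "\<sigma> \<noteq> 0" "\<Delta> > 0" "x \<in> igrid \<Delta>"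
  shows "((\<lambda>a. gauss_kernel \<sigma> (a - x)) has_sum gauss_Z \<Delta> \<sigma>) (igrid \<Delta>)"
  using assms summable_on_gauss_kernel[OF assms(1,2)]
  by (intro has_sum_igrid_shift) (auto simp: gauss_Z_eq_infsum)

lemma has_sum_gauss_kernel_shift_inner:
  assumes "\<sigma> \<noteq> 0" "\<Delta> > 0" "y \<in> igrid \<Delta>"
  shows "((\<lambda>a. gauss_kernel \<sigma> (a - y) * inner (a - y) v) has_sum 0) (igrid \<Delta>)"
proof (rule has_sum_igrid_shift[OF assms(3)])
  have "(\<lambda>d. gauss_kernel \<sigma> d * inner d v) summable_on igrid \<Delta>"
    using assms(1,2) Cauchy_Schwarz_ineq2 by (rule summable_on_gauss_kernel_mult)
  moreover have "(\<Sum>\<^sub>\<infinity>d\<in>igrid \<Delta>. gauss_kernel \<sigma> d * inner d v) = 0"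
  proof (rule infsum_odd_eq_0)
    show "- d \<in> igrid \<Delta>" if "d \<in> igrid \<Delta>" for d
      using that by (rule uminus_in_igrid)
    show "gauss_kernel \<sigma> (- d) * inner (- d) v = - (gauss_kernel \<sigma> d * inner d v)" for d
      by (simp add: gauss_kernel_uminus)
  qed
  ultimately show "((\<lambda>d. gauss_kernel \<sigma> d * inner d v) has_sum 0) (igrid \<Delta>)"
    by (simp add: has_sum_iff)
qed

lemma summable_on_abs_gauss_kernel_diff:
  assumes "\<sigma> \<noteq> 0" "\<Delta> > 0" "x \<in> igrid \<Delta>" "y \<in> igrid \<Delta>"
  shows "(\<lambda>a. \<bar>gauss_kernel \<sigma> (a - x) - gauss_kernel \<sigma> (a - y)\<bar>) summable_on igrid \<Delta>"
proof (rule summable_on_comparison_test)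
  show "(\<lambda>a. gauss_kernel \<sigma> (a - x) + gauss_kernel \<sigma> (a - y)) summable_on igrid \<Delta>"
    using has_sum_gauss_kernel_shift[OF assms(1,2,3), THEN has_sum_imp_summable]
      has_sum_gauss_kernel_shift[OF assms(1,2,4), THEN has_sum_imp_summable]
    by (rule summable_on_add)
  show "\<bar>gauss_kernel \<sigma> (a - x) - gauss_kernel \<sigma> (a - y)\<bar>
      \<le> gauss_kernel \<sigma> (a - x) + gauss_kernel \<sigma> (a - y)" for a
    using gauss_kernel_pos[of \<sigma> "a - x"] gauss_kernel_pos[of \<sigma> "a - y"] by linarith
qed simp

lemma abs_gauss_kernel_diff_le:
  fixes a x y :: "'a::real_inner"
  assumes "\<sigma> \<noteq> 0" "t > 0"
  shows "\<bar>gauss_kernel \<sigma> (a - x) - gauss_kernel \<sigma> (a - y)\<bar>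
    \<le> (2 * t / 3 + 1 / (2 * t)) * gauss_kernel \<sigma> (a - x)
      + (t / 3 + ((norm (y - x))\<^sup>2 / (2 * \<sigma>\<^sup>2) - 1) / (2 * t)) * gauss_kernel \<sigma> (a - y)
      + gauss_kernel \<sigma> (a - y) * inner (a - y) (y - x) / (2 * \<sigma>\<^sup>2 * t)"
proof -
  define P Q where "P = gauss_kernel \<sigma> (a - x)" and "Q = gauss_kernel \<sigma> (a - y)"
  have regroup: "t * (q + 2 * p) / 3 + (q * ((2 * i + r\<^sup>2) / (2 * \<sigma>\<^sup>2)) - q + p) / (2 * t)
      = (2 * t / 3 + 1 / (2 * t)) * p + (t / 3 + (r\<^sup>2 / (2 * \<sigma>\<^sup>2) - 1) / (2 * t)) * q
        + q * i / (2 * \<sigma>\<^sup>2 * t)" for p q i r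
    using assms by (simp add: field_simps)
  have "\<bar>P - Q\<bar> = \<bar>Q - P\<bar>"
    by (rule abs_minus_commute)
  also have "\<dots> \<le> t * (Q + 2 * P) / 3 + (Q * ln (Q / P) - Q + P) / (2 * t)"
    unfolding P_def Q_def by (rule abs_diff_le_relative_entropy[OF gauss_kernel_pos gauss_kernel_pos \<open>t > 0\<close>])
  also have "ln (Q / P) = (2 * inner (a - y) (y - x) + (norm (y - x))\<^sup>2) / (2 * \<sigma>\<^sup>2)"
    unfolding P_def Q_def by (rule ln_gauss_kernel_ratio)
  finally show ?thesis
    unfolding regroup P_def Q_def .
qed

lemma infsum_abs_gauss_kernel_diff_le:
  assumes "\<sigma> > 0" "\<Delta> > 0" and x: "x \<in> igrid \<Delta>" and y: "y \<in> igrid \<Delta>"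
  shows "(\<Sum>\<^sub>\<infinity>a\<in>igrid \<Delta>. \<bar>gauss_kernel \<sigma> (a - x) - gauss_kernel \<sigma> (a - y)\<bar>)
    \<le> gauss_Z \<Delta> \<sigma> * norm (x - y) / \<sigma>"
proof (cases "x = y")
  case False
  define r where "r = norm (y - x)"
  \<comment> \<open>This choice of \<open>t\<close> balances the two terms of the summed Pinsker bound.\<close>
  define t where "t = r / (2 * \<sigma>)"
  have "t > 0"
    using False assms(1) by (simp add: r_def t_def)
  define \<alpha> where "\<alpha> = 2 * t / 3 + 1 / (2 * t)"
  define \<beta> where "\<beta> = t / 3 + (r\<^sup>2 / (2 * \<sigma>\<^sup>2) - 1) / (2 * t)"
  define R where "R a = \<alpha> * gauss_kernel \<sigma> (a - x) + \<beta> * gauss_kernel \<sigma> (a - y)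
    + gauss_kernel \<sigma> (a - y) * inner (a - y) (y - x) / (2 * \<sigma>\<^sup>2 * t)" for a
  have "(R has_sum (\<alpha> * gauss_Z \<Delta> \<sigma> + \<beta> * gauss_Z \<Delta> \<sigma> + 0 / (2 * \<sigma>\<^sup>2 * t))) (igrid \<Delta>)"
    unfolding R_def using assms
    by (intro has_sum_add has_sum_cmult_right has_sum_divide_const has_sum_gauss_kernel_shift
        has_sum_gauss_kernel_shift_inner) auto
  then have R: "(R has_sum (\<alpha> + \<beta>) * gauss_Z \<Delta> \<sigma>) (igrid \<Delta>)"
    by (simp add: distrib_right)
  have "\<bar>gauss_kernel \<sigma> (a - x) - gauss_kernel \<sigma> (a - y)\<bar> \<le> R a" for a
    unfolding R_def \<alpha>_def \<beta>_def r_def using assms(1) \<open>t > 0\<close> by (intro abs_gauss_kernel_diff_le) auto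
  then have "(\<Sum>\<^sub>\<infinity>a\<in>igrid \<Delta>. \<bar>gauss_kernel \<sigma> (a - x) - gauss_kernel \<sigma> (a - y)\<bar>) \<le> infsum R (igrid \<Delta>)"
    using summable_on_abs_gauss_kernel_diff[of \<sigma> \<Delta> x y] assms R
    by (intro infsum_mono) (auto intro: has_sum_imp_summable)
  moreover have "\<alpha> + \<beta> = norm (x - y) / \<sigma>"
    using \<open>t > 0\<close> assms(1)
    by (simp add: \<alpha>_def \<beta>_def t_def r_def norm_minus_commute field_simps power2_eq_square)
  ultimately show ?thesis
    using R by (simp add: infsumI mult.commute)
qed simp

section \<open>Couplings\<close>

lemma sum_mult_marginals_diff:
  fixes \<gamma> :: "'a \<Rightarrow> 'b \<Rightarrow> 'c::comm_ring"
  assumes "\<And>x. x \<in> A \<Longrightarrow> (\<Sum>y\<in>B. \<gamma> x y) = p x" "\<And>y. y \<in> B \<Longrightarrow> (\<Sum>x\<in>A. \<gamma> x y) = q y"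
  shows "(\<Sum>x\<in>A. f x * p x) - (\<Sum>y\<in>B. g y * q y) = (\<Sum>x\<in>A. \<Sum>y\<in>B. \<gamma> x y * (f x - g y))"
proof -
  have "(\<Sum>x\<in>A. f x * p x) = (\<Sum>x\<in>A. \<Sum>y\<in>B. \<gamma> x y * f x)"
    by (intro sum.cong) (simp_all add: assms(1)[symmetric] sum_distrib_left mult.commute)
  moreover have "(\<Sum>y\<in>B. g y * q y) = (\<Sum>y\<in>B. \<Sum>x\<in>A. \<gamma> x y * g y)"
    by (intro sum.cong) (simp_all add: assms(2)[symmetric] sum_distrib_left mult.commute)
  moreover have "\<dots> = (\<Sum>x\<in>A. \<Sum>y\<in>B. \<gamma> x y * g y)"
    by (rule sum.swap)
  ultimately show ?thesis
    by (simp add: right_diff_distrib sum_subtractf)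
qed

lemma Htilde_diff_eq:
  assumes "is_coupling \<Delta> p q \<gamma>"
  shows "Htilde \<Delta> \<sigma> p a - Htilde \<Delta> \<sigma> q a
    = (\<Sum>x\<in>grid \<Delta>. \<Sum>y\<in>grid \<Delta>. \<gamma> x y * (gauss_kernel \<sigma> (a - x) - gauss_kernel \<sigma> (a - y)))
      / gauss_Z \<Delta> \<sigma>"
  using assms unfolding Htilde_eq is_coupling_def
  by (simp add: sum_mult_marginals_diff flip: diff_divide_distrib)

lemma abs_Htilde_diff_le:
  assumes "is_coupling \<Delta> p q \<gamma>"
  shows "\<bar>Htilde \<Delta> \<sigma> p a - Htilde \<Delta> \<sigma> q a\<bar>
    \<le> (\<Sum>x\<in>grid \<Delta>. \<Sum>y\<in>grid \<Delta>. \<gamma> x y * \<bar>gauss_kernel \<sigma> (a - x) - gauss_kernel \<sigma> (a - y)\<bar>)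
      / gauss_Z \<Delta> \<sigma>"
proof -
  have "gauss_Z \<Delta> \<sigma> \<ge> 0"
    unfolding gauss_Z_eq_infsum by (rule infsum_nonneg) (simp add: less_imp_le gauss_kernel_pos)
  moreover have "\<bar>\<Sum>x\<in>grid \<Delta>. \<Sum>y\<in>grid \<Delta>. \<gamma> x y * (gauss_kernel \<sigma> (a - x) - gauss_kernel \<sigma> (a - y))\<bar>
      \<le> (\<Sum>x\<in>grid \<Delta>. \<Sum>y\<in>grid \<Delta>. \<gamma> x y * \<bar>gauss_kernel \<sigma> (a - x) - gauss_kernel \<sigma> (a - y)\<bar>)"
    using assms
    by (intro order_trans[OF sum_abs] sum_mono order_trans[OF sum_abs])
      (simp_all add: abs_mult is_coupling_def)
  ultimately show ?thesis
    unfolding Htilde_diff_eq[OF assms] abs_divide by (simp add: divide_right_mono)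
qed

lemma infsum_abs_Htilde_diff_le:
  assumes "\<sigma> > 0" "\<Delta> > 0" and \<gamma>: "is_coupling \<Delta> p q \<gamma>"
  shows "(\<Sum>\<^sub>\<infinity>a\<in>igrid \<Delta>. \<bar>Htilde \<Delta> \<sigma> p a - Htilde \<Delta> \<sigma> q a\<bar>)
    \<le> (\<Sum>x\<in>grid \<Delta>. \<Sum>y\<in>grid \<Delta>. \<gamma> x y * norm (x - y)) / \<sigma>"
proof -
  define Z where "Z = gauss_Z \<Delta> \<sigma>"
  have "Z > 0"
    using gauss_Z_ge_1[of \<sigma> \<Delta>] assms(1,2) by (simp add: Z_def)
  have grid: "x \<in> igrid \<Delta>" if "x \<in> grid \<Delta>" for x
    using grid_subset_igrid that by blast
  define S where "S x y a = \<bar>gauss_kernel \<sigma> (a - x) - gauss_kernel \<sigma> (a - y)\<bar>"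
    for x y a :: "real \<times> real"
  define B where "B a = (\<Sum>x\<in>grid \<Delta>. \<Sum>y\<in>grid \<Delta>. \<gamma> x y * S x y a) / Z" for a
  have "(S x y has_sum infsum (S x y) (igrid \<Delta>)) (igrid \<Delta>)" if "x \<in> grid \<Delta>" "y \<in> grid \<Delta>" for x y
    unfolding S_def using assms(1,2) grid[OF that(1)] grid[OF that(2)]
    by (intro has_sum_infsum summable_on_abs_gauss_kernel_diff) auto
  then have B: "(B has_sum (\<Sum>x\<in>grid \<Delta>. \<Sum>y\<in>grid \<Delta>. \<gamma> x y * infsum (S x y) (igrid \<Delta>)) / Z) (igrid \<Delta>)"
    unfolding B_def by (intro has_sum_divide_const has_sum_sum has_sum_cmult_right finite_grid)
  have pointwise: "\<bar>Htilde \<Delta> \<sigma> p a - Htilde \<Delta> \<sigma> q a\<bar> \<le> B a" for a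
    unfolding B_def S_def Z_def by (rule abs_Htilde_diff_le[OF \<gamma>])
  have "B summable_on igrid \<Delta>"
    using B by (rule has_sum_imp_summable)
  then have "(\<lambda>a. \<bar>Htilde \<Delta> \<sigma> p a - Htilde \<Delta> \<sigma> q a\<bar>) summable_on igrid \<Delta>"
    by (rule summable_on_comparison_test[OF _ pointwise]) simp
  then have "(\<Sum>\<^sub>\<infinity>a\<in>igrid \<Delta>. \<bar>Htilde \<Delta> \<sigma> p a - Htilde \<Delta> \<sigma> q a\<bar>) \<le> infsum B (igrid \<Delta>)"
    using \<open>B summable_on igrid \<Delta>\<close> pointwise by (rule infsum_mono)
  also have "\<dots> = (\<Sum>x\<in>grid \<Delta>. \<Sum>y\<in>grid \<Delta>. \<gamma> x y * infsum (S x y) (igrid \<Delta>)) / Z"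
    using B by (rule infsumI)
  also have "\<dots> \<le> (\<Sum>x\<in>grid \<Delta>. \<Sum>y\<in>grid \<Delta>. \<gamma> x y * (Z * norm (x - y) / \<sigma>)) / Z"
    unfolding S_def Z_def using assms \<open>Z > 0\<close>
    by (intro divide_right_mono sum_mono mult_left_mono infsum_abs_gauss_kernel_diff_le)
      (auto intro: grid simp: Z_def is_coupling_def)
  also have "\<dots> = (\<Sum>x\<in>grid \<Delta>. \<Sum>y\<in>grid \<Delta>. \<gamma> x y * norm (x - y)) / \<sigma>"
    using \<open>Z > 0\<close> by (simp add: sum_divide_distrib sum_distrib_left)
  finally show ?thesis .
qed

lemma sum_weighted_square_le:
  fixes w f :: "'a \<Rightarrow> real"
  assumes "\<And>i. i \<in> I \<Longrightarrow> w i \<ge> 0"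
  shows "(\<Sum>i\<in>I. w i * f i)\<^sup>2 \<le> (\<Sum>i\<in>I. w i) * (\<Sum>i\<in>I. w i * (f i)\<^sup>2)"
proof -
  have "(\<Sum>i\<in>I. w i * f i)\<^sup>2 = (\<Sum>i\<in>I. sqrt (w i) * (sqrt (w i) * f i))\<^sup>2"
    using assms by (simp add: mult.assoc[symmetric])
  also have "\<dots> \<le> (\<Sum>i\<in>I. (sqrt (w i))\<^sup>2) * (\<Sum>i\<in>I. (sqrt (w i) * f i)\<^sup>2)"
    by (rule Cauchy_Schwarz_ineq_sum)
  also have "\<dots> = (\<Sum>i\<in>I. w i) * (\<Sum>i\<in>I. w i * (f i)\<^sup>2)"
    using assms by (simp add: power_mult_distrib)
  finally show ?thesis .
qed

lemma norm_sq_le_l1dist: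
  assumes "x \<in> grid \<Delta>" "y \<in> grid \<Delta>"
  shows "(norm (x - y))\<^sup>2 \<le> l1dist x y"
proof -
  have unit: "0 \<le> fst z \<and> fst z \<le> 1 \<and> 0 \<le> snd z \<and> snd z \<le> 1" if "z \<in> grid \<Delta>" for z
    using that by (auto simp: grid_def divide_le_eq)
  have sq_le_abs: "t\<^sup>2 \<le> \<bar>t\<bar>" if "\<bar>t\<bar> \<le> 1" for t :: real
  proof -
    have "t\<^sup>2 = \<bar>t\<bar> * \<bar>t\<bar>"
      by (simp add: power2_eq_square)
    also have "\<dots> \<le> \<bar>t\<bar> * 1"
      using that by (rule mult_left_mono) simp
    finally show ?thesis
      by simp
  qed
  have "(norm (x - y))\<^sup>2 = (fst x - fst y)\<^sup>2 + (snd x - snd y)\<^sup>2"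
    by (cases x, cases y) (simp add: norm_Pair)
  also have "\<dots> \<le> \<bar>fst x - fst y\<bar> + \<bar>snd x - snd y\<bar>"
    using unit[OF assms(1)] unit[OF assms(2)] by (intro add_mono sq_le_abs) auto
  finally show ?thesis
    by (simp add: l1dist_def)
qed

lemma TV_Htilde_sq_le_transport_cost:
  assumes "\<Delta> > 0" "\<sigma> > 0" "is_distr \<Delta> p" and \<gamma>: "is_coupling \<Delta> p q \<gamma>"
  shows "(2 * \<sigma> * TV \<Delta> (Htilde \<Delta> \<sigma> p) (Htilde \<Delta> \<sigma> q))\<^sup>2
    \<le> (\<Sum>x\<in>grid \<Delta>. \<Sum>y\<in>grid \<Delta>. \<gamma> x y * l1dist x y)"
proof -
  define G where "G = grid \<Delta> \<times> grid \<Delta>"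
  have \<gamma>_nonneg: "\<And>z. z \<in> G \<Longrightarrow> \<gamma> (fst z) (snd z) \<ge> 0"
    using \<gamma> by (auto simp: is_coupling_def G_def)
  have "(\<Sum>z\<in>G. \<gamma> (fst z) (snd z)) = (\<Sum>x\<in>grid \<Delta>. \<Sum>y\<in>grid \<Delta>. \<gamma> x y)"
    by (simp add: G_def sum.cartesian_product case_prod_beta)
  also have "\<dots> = 1"
    using \<gamma> assms(3) by (simp add: is_coupling_def is_distr_def)
  finally have mass: "(\<Sum>z\<in>G. \<gamma> (fst z) (snd z)) = 1" .
  have "0 \<le> 2 * \<sigma> * TV \<Delta> (Htilde \<Delta> \<sigma> p) (Htilde \<Delta> \<sigma> q)"
    using assms(2) by (simp add: TV_def infsum_nonneg)
  moreover have "2 * \<sigma> * TV \<Delta> (Htilde \<Delta> \<sigma> p) (Htilde \<Delta> \<sigma> q) \<le> (\<Sum>z\<in>G. \<gamma> (fst z) (snd z) * norm (fst z - snd z))"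
    using infsum_abs_Htilde_diff_le[OF assms(2,1) \<gamma>] assms(2)
    by (simp add: TV_def G_def sum.cartesian_product case_prod_beta pos_le_divide_eq mult.commute)
  ultimately have "(2 * \<sigma> * TV \<Delta> (Htilde \<Delta> \<sigma> p) (Htilde \<Delta> \<sigma> q))\<^sup>2
      \<le> (\<Sum>z\<in>G. \<gamma> (fst z) (snd z) * norm (fst z - snd z))\<^sup>2"
    by (simp add: power_mono)
  also have "\<dots> \<le> (\<Sum>z\<in>G. \<gamma> (fst z) (snd z) * (norm (fst z - snd z))\<^sup>2)"
    using sum_weighted_square_le[of G "\<lambda>z. \<gamma> (fst z) (snd z)" "\<lambda>z. norm (fst z - snd z)"]
      \<gamma>_nonneg mass by simp
  also have "\<dots> \<le> (\<Sum>z\<in>G. \<gamma> (fst z) (snd z) * l1dist (fst z) (snd z))"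
    using \<gamma>_nonneg by (intro sum_mono mult_left_mono norm_sq_le_l1dist) (auto simp: G_def)
  finally show ?thesis
    by (simp add: G_def sum.cartesian_product case_prod_beta)
qed

lemma is_coupling_product:
  assumes "is_distr \<Delta> p" "is_distr \<Delta> q"
  shows "is_coupling \<Delta> p q (\<lambda>x y. p x * q y)"
  using assms by (simp add: is_coupling_def is_distr_def flip: sum_distrib_left sum_distrib_right)

theorem lemma10:
  fixes \<Delta> :: nat and \<sigma> :: real and p q :: "real \<times> real \<Rightarrow> real"
  assumes "\<Delta> > 0" and "\<sigma> > 0"
    and "is_distr \<Delta> p" and "is_distr \<Delta> q"
  shows "TV \<Delta> (Htilde \<Delta> \<sigma> p) (Htilde \<Delta> \<sigma> q) \<le> sqrt (EMD \<Delta> p q) / (2 * \<sigma>)"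
proof -
  let ?costs = "{(\<Sum>x\<in>grid \<Delta>. \<Sum>y\<in>grid \<Delta>. \<gamma> x y * l1dist x y) | \<gamma>. is_coupling \<Delta> p q \<gamma>}"
  have "?costs \<noteq> {}"
    using is_coupling_product[OF assms(3,4)] by blast
  then have "(2 * \<sigma> * TV \<Delta> (Htilde \<Delta> \<sigma> p) (Htilde \<Delta> \<sigma> q))\<^sup>2 \<le> EMD \<Delta> p q"
    unfolding EMD_def
    by (rule cInf_greatest) (use TV_Htilde_sq_le_transport_cost[OF assms(1-3)] in blast)
  then have "2 * \<sigma> * TV \<Delta> (Htilde \<Delta> \<sigma> p) (Htilde \<Delta> \<sigma> q) \<le> sqrt (EMD \<Delta> p q)"
    by (rule real_le_rsqrt)
  then show ?thesis
    using assms(2) by (simp add: pos_le_divide_eq mult.commute mult.left_commute)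
qed

end
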